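(* Let $U$ be a nonempty finite set, $R\subseteq U\times U$ serial and transitive, and $r$ the rank function of $M(Reg(U,R))$. Then for every $X\in Reg(U,R)$ and every $e\in U\setminus X$, $r(X\cup\{e\})=h(X)+1$.
   Context: $R_s(x)=\{y\in U\mid xRy\}$; $\underline{R}(X)=\{x\mid R_s(x)\subseteq X\}$, $\overline{R}(X)=\{x\mid R_s(x)\cap X\neq\emptyset\}$; $X$ is regular if $X=\underline{R}(\overline{R}(X))$, and $Reg(U,R)$ is the lattice of regular sets under inclusion, with least element $\emptyset$. $h(A)$ is the length of a maximal chain in $[\emptyset,A]$. $M(Reg(U,R))$ is the matroid on $U$ with independent sets $\{X\subseteq U\mid h(Y)\ge|X\cap Y|\ \forall Y\in Reg(U,R)\}$ and rank function $r(X)=\max\{|I|\mid I\subseteq X \text{ independent}\}$. *)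

theory Defs
  imports Main
begin

definition successors :: "'a set \<Rightarrow> ('a \<times> 'a) set \<Rightarrow> 'a \<Rightarrow> 'a set" where
  "successors U R x = {y \<in> U. (x, y) \<in> R}"

definition lower_approx :: "'a set \<Rightarrow> ('a \<times> 'a) set \<Rightarrow> 'a set \<Rightarrow> 'a set" where
  "lower_approx U R X = {x \<in> U. successors U R x \<subseteq> X}"

definition upper_approx :: "'a set \<Rightarrow> ('a \<times> 'a) set \<Rightarrow> 'a set \<Rightarrow> 'a set" where
  "upper_approx U R X = {x \<in> U. successors U R x \<inter> X \<noteq> {}}"

definition Reg :: "'a set \<Rightarrow> ('a \<times> 'a) set \<Rightarrow> 'a set set" where
  "Reg U R = {X. X \<subseteq> U \<and> X = lower_approx U R (upper_approx U R X)}"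

definition serial_on :: "'a set \<Rightarrow> ('a \<times> 'a) set \<Rightarrow> bool" where
  "serial_on U R \<longleftrightarrow> (\<forall>x\<in>U. \<exists>y\<in>U. (x, y) \<in> R)"

definition reg_chain :: "'a set \<Rightarrow> ('a \<times> 'a) set \<Rightarrow> 'a set \<Rightarrow> 'a set set \<Rightarrow> bool" where
  "reg_chain U R A C \<longleftrightarrow> finite C \<and> C \<subseteq> {Y \<in> Reg U R. Y \<subseteq> A}
     \<and> (\<forall>Y\<in>C. \<forall>Z\<in>C. Y \<subseteq> Z \<or> Z \<subseteq> Y)"

(* h(A): length (number of elements minus one) of a maximal chain in [\<emptyset>, A] *)
definition height :: "'a set \<Rightarrow> ('a \<times> 'a) set \<Rightarrow> 'a set \<Rightarrow> nat" where
  "height U R A = Max {card C | C. reg_chain U R A C} - 1"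

definition reg_indep :: "'a set \<Rightarrow> ('a \<times> 'a) set \<Rightarrow> 'a set \<Rightarrow> bool" where
  "reg_indep U R X \<longleftrightarrow> X \<subseteq> U \<and> (\<forall>Y\<in>Reg U R. height U R Y \<ge> card (X \<inter> Y))"

definition reg_rank :: "'a set \<Rightarrow> ('a \<times> 'a) set \<Rightarrow> 'a set \<Rightarrow> nat" where
  "reg_rank U R X = Max {card I | I. I \<subseteq> X \<and> reg_indep U R I}"

end

theory Submission
  imports Defs
begin

(*
  Call t terminal if every
  successor of t is again a predecessor of t; the terminal points split into clusters of
  mutually related points, and we fix one representative per cluster, obtaining a set Rep.
  Every point reaches some representative, and a regular set Y is determined by its trace
  Y \<inter> Rep:  Y = Phi (Y \<inter> Rep)  with  Phi S = {x \<in> U. every representative reachable from x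
  lies in S};  conversely Phi S is regular with trace S for every S \<subseteq> Rep.  So the interval
  [\<emptyset>, Y] of Reg(U,R) is isomorphic to the power set of Y \<inter> Rep, and  h(Y) = |Y \<inter> Rep|.
  For the theorem, an independent I \<subseteq> X \<union> {e} has at most h(X) points inside X, so
  r(X \<union> {e}) \<le> h(X) + 1; and insert e (X \<inter> Rep) is independent of that size, because a
  regular Y containing e is not contained in X and so has more representatives than X \<inter> Y.
*)

lemma nat_Max_eqI:
  fixes M :: "nat set"
  assumes "m \<in> M" and "\<And>n. n \<in> M \<Longrightarrow> n \<le> m"
  shows "Max M = m"
proof (rule Max_eqI)
  show "finite M" unfolding finite_nat_set_iff_bounded_le using assms(2) by blast
qed (use assms in auto)

definition subset_chain :: "'b set set \<Rightarrow> bool" where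
  "subset_chain \<C> \<longleftrightarrow> (\<forall>A\<in>\<C>. \<forall>B\<in>\<C>. A \<subseteq> B \<or> B \<subseteq> A)"

text \<open>A chain of subsets of a finite set S has at most |S| + 1 members, since the
  members have pairwise distinct cardinalities in {0..|S|}.\<close>
lemma subset_chain_card_le:
  assumes "finite S" and "\<C> \<subseteq> Pow S" and "subset_chain \<C>"
  shows "card \<C> \<le> card S + 1"
proof -
  have fin: "finite A" if "A \<in> \<C>" for A
    using that assms(1,2) finite_subset by blast
  have "inj_on card \<C>"
  proof (rule inj_onI)
    fix A B assume A: "A \<in> \<C>" and B: "B \<in> \<C>" and eq: "card A = card B"
    consider "A \<subseteq> B" | "B \<subseteq> A" using A B assms(3) unfolding subset_chain_def by blast
    then show "A = B"
    proof cases
      case 1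
      then show ?thesis using card_subset_eq[OF fin[OF B]] eq by metis
    next
      case 2
      then show ?thesis using card_subset_eq[OF fin[OF A]] eq by metis
    qed
  qed
  then have "card \<C> = card (card ` \<C>)" by (rule card_image[symmetric])
  also have "\<dots> \<le> card {..card S}"
    using assms(1,2) by (intro card_mono) (auto intro: card_mono)
  finally show ?thesis by simp
qed

lemma subset_chain_exists:
  assumes "finite S"
  shows "\<exists>\<C>. \<C> \<subseteq> Pow S \<and> subset_chain \<C> \<and> card \<C> = card S + 1"
  using assms
proof (induction S rule: finite_induct)
  case empty
  show ?case by (intro exI[of _ "{{}}"]) (simp add: subset_chain_def)
next
  case (insert x F)
  then obtain \<C> where C: "\<C> \<subseteq> Pow F" "subset_chain \<C>" "card \<C> = card F + 1" by blast
  have fin: "finite \<C>" using C(1) insert(1) finite_subset by blast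
  have new: "insert x F \<notin> \<C>" using C(1) insert(2) by blast
  have "insert (insert x F) \<C> \<subseteq> Pow (insert x F)" using C(1) by blast
  moreover have "subset_chain (insert (insert x F) \<C>)"
    using C(1,2) unfolding subset_chain_def by blast
  moreover have "card (insert (insert x F) \<C>) = card (insert x F) + 1"
    using C(3) fin new insert(1,2) by simp
  ultimately show ?case by blast
qed

section \<open>Serial transitive relations on a finite set\<close>

text \<open>The standing hypotheses of the theorem.\<close>
locale serial_transitive =
  fixes U :: "'a set" and R :: "('a \<times> 'a) set"
  assumes finite_U: "finite U" and R_sub: "R \<subseteq> U \<times> U"
    and serial: "serial_on U R" and transitive: "trans R"
begin

lemma R_trans: "(x, y) \<in> R \<Longrightarrow> (y, z) \<in> R \<Longrightarrow> (x, z) \<in> R"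
  using transitive by (meson transE)

lemma R_in_U: "(x, y) \<in> R \<Longrightarrow> x \<in> U \<and> y \<in> U"
  using R_sub by auto

lemma R_serial: "x \<in> U \<Longrightarrow> \<exists>y. (x, y) \<in> R"
  using serial unfolding serial_on_def by auto

lemma successors_eq: "successors U R x = {y. (x, y) \<in> R}"
  unfolding successors_def using R_in_U by blast

lemma lower_upper_iff:
  "x \<in> lower_approx U R (upper_approx U R Y) \<longleftrightarrow>
     x \<in> U \<and> (\<forall>y. (x, y) \<in> R \<longrightarrow> (\<exists>z. (y, z) \<in> R \<and> z \<in> Y))"
  unfolding lower_approx_def upper_approx_def successors_eq using R_in_U by blast

subsection \<open>Terminal elements and their representatives\<close>

definition terminal :: "'a \<Rightarrow> bool" where
  "terminal t \<longleftrightarrow> t \<in> U \<and> (\<forall>y. (t, y) \<in> R \<longrightarrow> (y, t) \<in> R)"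

text \<open>The representative of a terminal t: some successor, chosen uniformly for all
  elements of the cluster of t (they have the same successors).\<close>
definition rep :: "'a \<Rightarrow> 'a" where
  "rep t = (SOME r. (t, r) \<in> R)"

definition Rep :: "'a set" where
  "Rep = rep ` Collect terminal"

lemma terminal_refl: "terminal t \<Longrightarrow> (t, t) \<in> R"
  unfolding terminal_def using R_serial R_trans by blast

lemma terminal_succ: "terminal t \<Longrightarrow> (t, y) \<in> R \<Longrightarrow> terminal y"
  unfolding terminal_def using R_in_U R_trans by blast

lemma rep_succ: "terminal t \<Longrightarrow> (t, rep t) \<in> R"
  unfolding rep_def using terminal_refl by (metis someI)

lemma rep_cong:
  assumes "terminal t" and "(t, t') \<in> R"
  shows "rep t' = rep t"
proof -
  have "(\<lambda>r. (t', r) \<in> R) = (\<lambda>r. (t, r) \<in> R)"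
    using assms unfolding terminal_def by (metis R_trans)
  then show ?thesis unfolding rep_def by simp
qed

lemma Rep_terminal: "r \<in> Rep \<Longrightarrow> terminal r"
  unfolding Rep_def using rep_succ terminal_succ by auto

lemma Rep_in_U: "Rep \<subseteq> U"
  using Rep_terminal terminal_def by blast

lemma finite_trace: "finite (Z \<inter> Rep)"
  using Rep_in_U finite_U finite_subset by blast

lemma Rep_unique:
  assumes "r \<in> Rep" and "r' \<in> Rep" and "(r, r') \<in> R"
  shows "r' = r"
proof -
  have fix_rep: "rep s = s" if "s \<in> Rep" for s
    using that unfolding Rep_def using rep_cong rep_succ by auto
  show ?thesis
    using rep_cong[OF Rep_terminal[OF assms(1)] assms(3)] fix_rep assms(1,2) by simp
qed

text \<open>Every point reaches a terminal point: take a successor t with as few successors as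
  possible; then every successor of t has the same successors as t.\<close>
lemma reaches_terminal:
  assumes "y \<in> U"
  shows "\<exists>w. (y, w) \<in> R \<and> terminal w"
proof -
  define m where "m z = card {w. (z, w) \<in> R}" for z
  obtain t0 where "(y, t0) \<in> R" using R_serial assms by blast
  then obtain t where yt: "(y, t) \<in> R" and t_min: "\<And>z. (y, z) \<in> R \<Longrightarrow> m t \<le> m z"
    using ex_has_least_nat[of "\<lambda>z. (y, z) \<in> R" t0 m] by auto
  have fin: "finite {w. (z, w) \<in> R}" for z
    by (rule finite_subset[OF _ finite_U]) (auto dest: R_in_U)
  have same_succ: "{w. (v, w) \<in> R} = {w. (t, w) \<in> R}" if tv: "(t, v) \<in> R" for v
  proof -
    have sub: "{w. (v, w) \<in> R} \<subseteq> {w. (t, w) \<in> R}" using tv R_trans by blast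
    have "m t \<le> m v" using t_min R_trans[OF yt tv] .
    then have "card {w. (v, w) \<in> R} = card {w. (t, w) \<in> R}"
      using card_mono[OF fin sub] unfolding m_def by simp
    then show ?thesis using card_subset_eq[OF fin sub] by blast
  qed
  obtain w where tw: "(t, w) \<in> R" using R_serial R_in_U[OF yt] by blast
  have "terminal w"
    unfolding terminal_def
  proof (intro conjI allI impI)
    show "w \<in> U" using R_in_U[OF tw] by simp
    fix v assume "(w, v) \<in> R"
    then have "(t, v) \<in> R" using R_trans tw by blast
    then show "(v, w) \<in> R" using same_succ tw by blast
  qed
  then show ?thesis using R_trans[OF yt tw] by blast
qed

lemma reaches_Rep: "y \<in> U \<Longrightarrow> \<exists>r\<in>Rep. (y, r) \<in> R"
proof -
  assume "y \<in> U"
  then obtain w where "(y, w) \<in> R" "terminal w" using reaches_terminal by blast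
  then show ?thesis
    unfolding Rep_def using R_trans rep_succ by blast
qed

lemma closure_via_Rep:
  "(\<forall>y. (x, y) \<in> R \<longrightarrow> (\<exists>z. (y, z) \<in> R \<and> z \<in> Y)) \<longleftrightarrow>
     (\<forall>r\<in>Rep. (x, r) \<in> R \<longrightarrow> (\<exists>z. (r, z) \<in> R \<and> z \<in> Y))"
proof
  assume "\<forall>y. (x, y) \<in> R \<longrightarrow> (\<exists>z. (y, z) \<in> R \<and> z \<in> Y)"
  then show "\<forall>r\<in>Rep. (x, r) \<in> R \<longrightarrow> (\<exists>z. (r, z) \<in> R \<and> z \<in> Y)" by blast
next
  assume Rep_sees: "\<forall>r\<in>Rep. (x, r) \<in> R \<longrightarrow> (\<exists>z. (r, z) \<in> R \<and> z \<in> Y)"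
  show "\<forall>y. (x, y) \<in> R \<longrightarrow> (\<exists>z. (y, z) \<in> R \<and> z \<in> Y)"
  proof (intro allI impI)
    fix y assume xy: "(x, y) \<in> R"
    then obtain r where r: "r \<in> Rep" "(y, r) \<in> R" using reaches_Rep R_in_U by blast
    then obtain z where "(r, z) \<in> R" "z \<in> Y" using Rep_sees R_trans[OF xy] by blast
    then show "\<exists>z. (y, z) \<in> R \<and> z \<in> Y" using R_trans[OF r(2)] by blast
  qed
qed

subsection \<open>Regular sets are determined by their representatives\<close>

text \<open>The regular set with trace S on the representatives.\<close>
definition Phi :: "'a set \<Rightarrow> 'a set" where
  "Phi S = {x \<in> U. \<forall>r\<in>Rep. (x, r) \<in> R \<longrightarrow> r \<in> S}"

lemma Phi_mono: "S \<subseteq> T \<Longrightarrow> Phi S \<subseteq> Phi T"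
  unfolding Phi_def by blast

text \<open>Since representatives only reach themselves, Phi S has trace exactly S.\<close>
lemma Phi_trace:
  assumes "S \<subseteq> Rep"
  shows "Phi S \<inter> Rep = S"
proof
  show "Phi S \<inter> Rep \<subseteq> S"
    using Rep_terminal terminal_refl unfolding Phi_def by blast
  show "S \<subseteq> Phi S \<inter> Rep"
  proof
    fix r assume "r \<in> S"
    moreover have "r \<in> Rep" "r \<in> U" using \<open>r \<in> S\<close> assms Rep_in_U by blast+
    moreover have "r' = r" if "r' \<in> Rep" "(r, r') \<in> R" for r'
      using Rep_unique \<open>r \<in> Rep\<close> that by blast
    ultimately show "r \<in> Phi S \<inter> Rep" unfolding Phi_def by blast
  qed
qed

lemma Rep_sees_Phi:
  assumes "r \<in> Rep" and "S \<subseteq> Rep"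
  shows "(\<exists>z. (r, z) \<in> R \<and> z \<in> Phi S) \<longleftrightarrow> r \<in> S"
proof
  assume "\<exists>z. (r, z) \<in> R \<and> z \<in> Phi S"
  then obtain z where z: "(r, z) \<in> R" "z \<in> Phi S" by blast
  then have "(z, r) \<in> R" using Rep_terminal[OF assms(1)] unfolding terminal_def by blast
  then show "r \<in> S" using z(2) assms(1) unfolding Phi_def by blast
next
  assume "r \<in> S"
  then have "r \<in> Phi S" using Phi_trace[OF assms(2)] by blast
  then show "\<exists>z. (r, z) \<in> R \<and> z \<in> Phi S"
    using terminal_refl[OF Rep_terminal[OF assms(1)]] by blast
qed

lemma Phi_regular:
  assumes "S \<subseteq> Rep"
  shows "Phi S \<in> Reg U R"
proof -
  have "x \<in> lower_approx U R (upper_approx U R (Phi S)) \<longleftrightarrow>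
          x \<in> U \<and> (\<forall>r\<in>Rep. (x, r) \<in> R \<longrightarrow> r \<in> S)" for x
    unfolding lower_upper_iff closure_via_Rep by (simp add: Rep_sees_Phi[OF _ assms])
  then show ?thesis unfolding Reg_def Phi_def by blast
qed

lemma regular_eq_Phi_trace:
  assumes "Y \<in> Reg U R"
  shows "Y = Phi (Y \<inter> Rep)"
proof -
  have Y_iff: "x \<in> Y \<longleftrightarrow> x \<in> U \<and> (\<forall>r\<in>Rep. (x, r) \<in> R \<longrightarrow> (\<exists>z. (r, z) \<in> R \<and> z \<in> Y))"
    for x
  proof -
    have "x \<in> Y \<longleftrightarrow> x \<in> lower_approx U R (upper_approx U R Y)"
      using assms unfolding Reg_def by blast
    then show ?thesis unfolding lower_upper_iff closure_via_Rep .
  qed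
  have Rep_iff: "r \<in> Y \<longleftrightarrow> (\<exists>z. (r, z) \<in> R \<and> z \<in> Y)" if r: "r \<in> Rep" for r
  proof -
    have "(\<forall>r'\<in>Rep. (r, r') \<in> R \<longrightarrow> (\<exists>z. (r', z) \<in> R \<and> z \<in> Y)) \<longleftrightarrow>
          (\<exists>z. (r, z) \<in> R \<and> z \<in> Y)"
      using Rep_unique[OF r] terminal_refl[OF Rep_terminal[OF r]] r by blast
    then show ?thesis using Y_iff[of r] r Rep_in_U by blast
  qed
  show ?thesis
    unfolding Phi_def using Y_iff Rep_iff by blast
qed

lemma regular_subset_iff:
  assumes "Y \<in> Reg U R" and "Z \<in> Reg U R"
  shows "Y \<subseteq> Z \<longleftrightarrow> Y \<inter> Rep \<subseteq> Z \<inter> Rep"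
proof
  assume "Y \<inter> Rep \<subseteq> Z \<inter> Rep"
  then have "Phi (Y \<inter> Rep) \<subseteq> Phi (Z \<inter> Rep)" by (rule Phi_mono)
  then show "Y \<subseteq> Z"
    using regular_eq_Phi_trace[OF assms(1)] regular_eq_Phi_trace[OF assms(2)] by simp
qed blast

subsection \<open>The height of a regular set\<close>

lemma trace_inj: "inj_on (\<lambda>Z. Z \<inter> Rep) (Reg U R)"
  using regular_eq_Phi_trace by (intro inj_onI) metis

text \<open>Taking traces maps a chain in [\<emptyset>, Y] injectively to a chain of subsets of Y \<inter> Rep.\<close>
lemma reg_chain_card_le:
  assumes C: "reg_chain U R Y C"
  shows "card C \<le> card (Y \<inter> Rep) + 1"
proof -
  have C_reg: "C \<subseteq> Reg U R" and C_sub: "\<And>Z. Z \<in> C \<Longrightarrow> Z \<subseteq> Y"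
    and C_chain: "\<And>Z W. Z \<in> C \<Longrightarrow> W \<in> C \<Longrightarrow> Z \<subseteq> W \<or> W \<subseteq> Z"
    using C unfolding reg_chain_def by blast+
  have "card C = card ((\<lambda>Z. Z \<inter> Rep) ` C)"
    using inj_on_subset[OF trace_inj C_reg] by (rule card_image[symmetric])
  also have "\<dots> \<le> card (Y \<inter> Rep) + 1"
  proof (rule subset_chain_card_le[OF finite_trace])
    show "(\<lambda>Z. Z \<inter> Rep) ` C \<subseteq> Pow (Y \<inter> Rep)" using C_sub by blast
    show "subset_chain ((\<lambda>Z. Z \<inter> Rep) ` C)"
      unfolding subset_chain_def using C_chain by blast
  qed
  finally show ?thesis .
qed

text \<open>Applying Phi to a maximal chain of subsets of Y \<inter> Rep gives a chain in [\<emptyset>, Y].\<close>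
lemma reg_chain_exists:
  assumes Y: "Y \<in> Reg U R"
  shows "\<exists>C. reg_chain U R Y C \<and> card C = card (Y \<inter> Rep) + 1"
proof -
  obtain \<C> where \<C>: "\<C> \<subseteq> Pow (Y \<inter> Rep)" "subset_chain \<C>" "card \<C> = card (Y \<inter> Rep) + 1"
    using subset_chain_exists[OF finite_trace] by blast
  have fin: "finite \<C>" using \<C>(1) finite_trace by (meson finite_Pow_iff finite_subset)
  have in_Rep: "S \<subseteq> Rep" if "S \<in> \<C>" for S
    using that \<C>(1) by blast
  have inj: "inj_on Phi \<C>"
  proof (rule inj_onI)
    fix S T assume "S \<in> \<C>" "T \<in> \<C>" "Phi S = Phi T"
    then show "S = T" using Phi_trace in_Rep by metis
  qed
  have "Phi ` \<C> \<subseteq> {Z \<in> Reg U R. Z \<subseteq> Y}"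
  proof
    fix Z assume "Z \<in> Phi ` \<C>"
    then obtain S where S: "S \<in> \<C>" "Z = Phi S" by blast
    then have "S \<subseteq> Y \<inter> Rep" using \<C>(1) by blast
    then have "Phi S \<subseteq> Phi (Y \<inter> Rep)" by (rule Phi_mono)
    then have "Phi S \<subseteq> Y" by (simp add: regular_eq_Phi_trace[OF Y, symmetric])
    then show "Z \<in> {Z \<in> Reg U R. Z \<subseteq> Y}" using S Phi_regular[OF in_Rep[OF S(1)]] by blast
  qed
  moreover have "A \<subseteq> B \<or> B \<subseteq> A" if AB: "A \<in> Phi ` \<C>" "B \<in> Phi ` \<C>" for A B
  proof -
    obtain S T where "S \<in> \<C>" "T \<in> \<C>" "A = Phi S" "B = Phi T" using AB by blast
    then show ?thesis using \<C>(2) Phi_mono unfolding subset_chain_def by metis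
  qed
  ultimately have "reg_chain U R Y (Phi ` \<C>)"
    using fin unfolding reg_chain_def by blast
  moreover have "card (Phi ` \<C>) = card (Y \<inter> Rep) + 1"
    using card_image[OF inj] \<C>(3) by simp
  ultimately show ?thesis by blast
qed

lemma height_eq_card_trace:
  assumes "Y \<in> Reg U R"
  shows "height U R Y = card (Y \<inter> Rep)"
proof -
  let ?lengths = "{card C | C. reg_chain U R Y C}"
  have bound: "n \<le> card (Y \<inter> Rep) + 1" if n: "n \<in> ?lengths" for n
  proof -
    obtain C where "n = card C" "reg_chain U R Y C" using n by blast
    then show ?thesis using reg_chain_card_le by simp
  qed
  obtain C where C: "reg_chain U R Y C" "card C = card (Y \<inter> Rep) + 1"
    using reg_chain_exists[OF assms] by blast
  then have "card C \<in> ?lengths" by (intro CollectI exI[of _ C] conjI refl)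
  then have "Max ?lengths = card (Y \<inter> Rep) + 1"
    unfolding C(2) using bound by (rule nat_Max_eqI)
  then show ?thesis unfolding height_def by simp
qed

lemma indep_insert_trace:
  assumes X: "X \<in> Reg U R" and e: "e \<in> U - X"
  shows "reg_indep U R (insert e (X \<inter> Rep))"
  unfolding reg_indep_def
proof (intro conjI ballI)
  show "insert e (X \<inter> Rep) \<subseteq> U" using e Rep_in_U by blast
  fix Y assume Y: "Y \<in> Reg U R"
  show "card (insert e (X \<inter> Rep) \<inter> Y) \<le> height U R Y"
  proof (cases "e \<in> Y")
    case False
    then have "insert e (X \<inter> Rep) \<inter> Y \<subseteq> Y \<inter> Rep" by blast
    then have "card (insert e (X \<inter> Rep) \<inter> Y) \<le> card (Y \<inter> Rep)"
      by (rule card_mono[OF finite_trace])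
    then show ?thesis using height_eq_card_trace[OF Y] by simp
  next
    case True
    then have "\<not> Y \<subseteq> X" using e by blast
    then have "X \<inter> Y \<inter> Rep \<subset> Y \<inter> Rep" using regular_subset_iff[OF Y X] by blast
    then have "card (X \<inter> Y \<inter> Rep) < card (Y \<inter> Rep)"
      using psubset_card_mono finite_trace by blast
    moreover have "insert e (X \<inter> Rep) \<inter> Y = insert e (X \<inter> Y \<inter> Rep)"
      using True by blast
    moreover have "card (insert e (X \<inter> Y \<inter> Rep)) = card (X \<inter> Y \<inter> Rep) + 1"
      using e finite_trace[of "X \<inter> Y"] by simp
    ultimately show ?thesis using height_eq_card_trace[OF Y] by simp
  qed
qed

end

lemma indep_card_le_height_plus_one:
  assumes "finite U" and "X \<in> Reg U R" and "I \<subseteq> X \<union> {e}" and "reg_indep U R I"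
  shows "card I \<le> height U R X + 1"
proof -
  have "finite I" using assms(1,4) finite_subset unfolding reg_indep_def by blast
  have "card (I \<inter> X) \<le> height U R X" using assms(2,4) unfolding reg_indep_def by blast
  moreover have "card I \<le> card (insert e (I \<inter> X))"
    using assms(3) \<open>finite I\<close> by (intro card_mono) auto
  moreover have "card (insert e (I \<inter> X)) \<le> card (I \<inter> X) + 1"
    using \<open>finite I\<close> by (simp add: card_insert_if)
  ultimately show ?thesis by linarith
qed

theorem proposition6:
  fixes U :: "'a set" and R :: "('a \<times> 'a) set"
  assumes "finite U" and "U \<noteq> {}" and "R \<subseteq> U \<times> U"
    and "serial_on U R" and "trans R"
    and "X \<in> Reg U R" and "e \<in> U - X"
  shows "reg_rank U R (X \<union> {e}) = height U R X + 1"
proof -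
  interpret serial_transitive U R using assms by unfold_locales auto
  let ?I = "insert e (X \<inter> Rep)"
  have witness: "?I \<subseteq> X \<union> {e}" "reg_indep U R ?I"
    using indep_insert_trace[OF assms(6,7)] by auto
  let ?sizes = "{card I | I. I \<subseteq> X \<union> {e} \<and> reg_indep U R I}"
  have "e \<notin> X \<inter> Rep" using assms(7) by blast
  then have size_I: "card ?I = height U R X + 1"
    using finite_trace[of X] by (simp add: height_eq_card_trace[OF assms(6)])
  have attained: "card ?I \<in> ?sizes"
    by (intro CollectI exI[of _ ?I] conjI refl witness)
  have bound: "n \<le> card ?I" if n: "n \<in> ?sizes" for n
  proof -
    obtain I where "n = card I" "I \<subseteq> X \<union> {e}" "reg_indep U R I" using n by blast
    then show ?thesis
      unfolding size_I using indep_card_le_height_plus_one[OF assms(1,6)] by simp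
  qed
  have "reg_rank U R (X \<union> {e}) = Max ?sizes" unfolding reg_rank_def ..
  also have "\<dots> = card ?I" using attained bound by (rule nat_Max_eqI)
  also have "\<dots> = height U R X + 1" by (rule size_I)
  finally show ?thesis .
qed

end
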